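(* Let $(X_i,A_i,Y_i)_{1\le i\le n}$ be random with $X_i\in\mathcal X$, $A_i\in\{0,1\}$, $Y_i\in\mathcal Y$, and let $X'_1,\dots,X'_M$ be the distinct values among $X_1,\dots,X_n$. Suppose that, conditionally on $(X_{1:n},A_{1:n})$, the joint distribution of $(Y_1,\dots,Y_n)$ is invariant under every permutation of $[n]$ that maps each block $I_k=\{i: X_i=X'_k\}$ to itself ($k\in[M]$). Let $s:\mathcal X\times\mathcal Y\to\mathbb R$ be a fixed measurable score function and $S_i=s(X_i,Y_i)$. If $N^{(0)}\ge1$, define for every $x\in\mathcal X$ $$\hat C(x)=\Big\{y\in\mathcal Y:\ s(x,y)\le Q_{1-\alpha}\Big(\sum_{k=1}^M\sum_{i\in I_k^1}\frac{1}{N^{(0)}}\frac{N_k^0}{N_k}\delta_{S_i}+\frac{1}{N^{(0)}}\sum_{k=1}^M\frac{(N_k^0)^2}{N_k}\delta_{+\infty}\Big)\Big\},$$ and if $N^{(0)}=0$ let $\hat C(x)=\mathcal Y$. Then $$\mathbb E\Big[\frac{1}{N^{(0)}}\sum_{i\in I_{A=0}}\mathbf 1\{Y_i\in\hat C(X_i)\}\ \Big|\ X_{1:n},A_{1:n}\Big]\ge 1-\alpha.$$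
   Context: $Y_i$ is observed only when $A_i=1$. $I_{A=0}=\{i\in[n]:A_i=0\}$, $N^{(0)}=|I_{A=0}|$. For $k\in[M]$: $I_k=\{i:X_i=X'_k\}$, $I_k^0=\{i\in I_k:A_i=0\}$, $I_k^1=\{i\in I_k:A_i=1\}$, $N_k=|I_k|$, $N_k^0=|I_k^0|$. For a distribution $P$ on $\mathbb R\cup\{+\infty\}$ and $\alpha\in(0,1)$, $Q_{1-\alpha}(P)=\inf\{t\in\mathbb R: \mathbb P_{T\sim P}(T\le t)\ge1-\alpha\}$ (possibly $+\infty$); $\delta_v$ is the point mass at $v$. The coverage proportion $\frac{1}{N^{(0)}}\sum_{i\in I_{A=0}}\mathbf 1\{Y_i\in\hat C(X_i)\}$ is defined to equal $1$ when $N^{(0)}=0$. *)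

theory Defs
  imports "HOL-Probability.Probability" "HOL-Combinatorics.Permutations"
begin

text \<open>Q_{1-alpha} of the finitely supported distribution  sum_{j in J} w j * delta_{v j}
  on the extended reals: inf of the real t with P(T <= t) >= 1 - alpha (Inf of empty = +infinity).\<close>
definition wquantile :: "real \<Rightarrow> ('i \<Rightarrow> real) \<Rightarrow> ('i \<Rightarrow> ereal) \<Rightarrow> 'i set \<Rightarrow> ereal" where
  "wquantile \<alpha> w v J =
     Inf (ereal ` {t::real. (\<Sum>j\<in>{j\<in>J. v j \<le> ereal t}. w j) \<ge> 1 - \<alpha>})"

definition N0 :: "nat \<Rightarrow> (nat \<Rightarrow> nat) \<Rightarrow> nat" where
  "N0 n A = card {i\<in>{..<n}. A i = 0}"

definition Nblk :: "nat \<Rightarrow> (nat \<Rightarrow> 'x) \<Rightarrow> 'x \<Rightarrow> nat" where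
  "Nblk n X xv = card {j\<in>{..<n}. X j = xv}"

definition Nblk0 :: "nat \<Rightarrow> (nat \<Rightarrow> 'x) \<Rightarrow> (nat \<Rightarrow> nat) \<Rightarrow> 'x \<Rightarrow> nat" where
  "Nblk0 n X A xv = card {j\<in>{..<n}. X j = xv \<and> A j = 0}"

text \<open>Weights of the mixture: atom Some i (i with A i = 1) at S_i with weight
  (1/N0) * N_k^0 / N_k where k is the block of i; atom None at +infinity with weight
  (1/N0) * sum over distinct values x'_k of (N_k^0)^2 / N_k.\<close>
definition cq_weight :: "nat \<Rightarrow> (nat \<Rightarrow> 'x) \<Rightarrow> (nat \<Rightarrow> nat) \<Rightarrow> nat option \<Rightarrow> real" where
  "cq_weight n X A j = (case j of
      Some i \<Rightarrow> (1 / real (N0 n A)) * (real (Nblk0 n X A (X i)) / real (Nblk n X (X i)))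
    | None \<Rightarrow> (1 / real (N0 n A)) *
        (\<Sum>xv\<in>X ` {..<n}. real (Nblk0 n X A xv) ^ 2 / real (Nblk n X xv)))"

definition cq_value :: "('x \<Rightarrow> 'y \<Rightarrow> real) \<Rightarrow> (nat \<Rightarrow> 'x) \<Rightarrow> (nat \<Rightarrow> 'y) \<Rightarrow> nat option \<Rightarrow> ereal" where
  "cq_value s X Y j = (case j of Some i \<Rightarrow> ereal (s (X i) (Y i)) | None \<Rightarrow> PInfty)"

definition cq_atoms :: "nat \<Rightarrow> (nat \<Rightarrow> nat) \<Rightarrow> nat option set" where
  "cq_atoms n A = Some ` {i\<in>{..<n}. A i = 1} \<union> {None}"

definition Chat :: "real \<Rightarrow> ('x \<Rightarrow> 'y \<Rightarrow> real) \<Rightarrow> nat \<Rightarrow> (nat \<Rightarrow> 'x) \<Rightarrow> (nat \<Rightarrow> nat)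
                     \<Rightarrow> (nat \<Rightarrow> 'y) \<Rightarrow> 'x \<Rightarrow> 'y set" where
  "Chat \<alpha> s n X A Y x =
     (if N0 n A = 0 then UNIV
      else {y. ereal (s x y) \<le> wquantile \<alpha> (cq_weight n X A) (cq_value s X Y) (cq_atoms n A)})"

definition coverage :: "real \<Rightarrow> ('x \<Rightarrow> 'y \<Rightarrow> real) \<Rightarrow> nat \<Rightarrow> (nat \<Rightarrow> 'x) \<Rightarrow> (nat \<Rightarrow> nat)
                     \<Rightarrow> (nat \<Rightarrow> 'y) \<Rightarrow> real" where
  "coverage \<alpha> s n X A Y =
     (if N0 n A = 0 then 1
      else (1 / real (N0 n A)) *
        (\<Sum>i\<in>{i\<in>{..<n}. A i = 0}. if Y i \<in> Chat \<alpha> s n X A Y (X i) then 1 else 0))"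

end

theory Submission
  imports Defs
begin

text \<open>
  Give every unit j, observed or not, the weight w j = N_k^0 / (N0 N_k) that the quantile
  assigns to an observed unit of its block k; these weights sum to one. For every outcome vector, the
  units whose score has w-mass strictly below it smaller than 1 - alpha carry total
  weight at least 1 - alpha. Within a block the scores are exchangeable, so the
  probability of this event is constant on blocks, and averaging over blocks turns the
  w-weighted sum into the average over the untreated units. Finally, dropping the
  untreated units from the empirical distribution only lowers the mass below any score,
  and the remaining mass at +infinity never lies below a real score, so the event
  implies coverage.
\<close>

definition below_mass :: "('i \<Rightarrow> real) \<Rightarrow> ('i \<Rightarrow> real) \<Rightarrow> 'i set \<Rightarrow> real \<Rightarrow> real" where
  "below_mass w S J t = (\<Sum>j\<in>{j\<in>J. S j < t}. w j)"

lemma below_mass_eq_sum_if: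
  "finite J \<Longrightarrow> below_mass w S J t = (\<Sum>j\<in>J. if S j < t then w j else 0)"
  unfolding below_mass_def by (simp add: sum.inter_filter)

lemma below_mass_mono_set:
  assumes "finite J" "K \<subseteq> J" "\<And>j. j \<in> J \<Longrightarrow> 0 \<le> w j"
  shows "below_mass w S K t \<le> below_mass w S J t"
  unfolding below_mass_def by (rule sum_mono2) (use assms in auto)

lemma below_mass_permute:
  assumes perm: "\<pi> permutes J"
    and w: "\<And>j. j \<in> J \<Longrightarrow> w (\<pi> j) = w j"
    and S': "\<And>j. j \<in> J \<Longrightarrow> S' j = S (\<pi> j)"
  shows "below_mass w S' J t = below_mass w S J t"
proof -
  have img: "\<pi> ` {j\<in>J. S' j < t} = {k\<in>J. S k < t}"
  proof (intro equalityI subsetI)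
    fix k assume k: "k \<in> {k\<in>J. S k < t}"
    have "inv \<pi> k \<in> J" "\<pi> (inv \<pi> k) = k"
      using k perm by (auto simp: permutes_inv permutes_in_image permutes_inverses(1))
    then show "k \<in> \<pi> ` {j\<in>J. S' j < t}"
      using k S' by (metis (mono_tags, lifting) image_eqI mem_Collect_eq)
  qed (use perm S' in \<open>auto simp: permutes_in_image\<close>)
  have "inj_on \<pi> {j\<in>J. S' j < t}"
    using permutes_inj[OF perm] by (auto intro: inj_on_subset)
  then show ?thesis
    unfolding below_mass_def img[symmetric] by (simp add: sum.reindex w)
qed

lemma finite_ereal_below_bound:
  fixes v :: "'i \<Rightarrow> ereal"
  assumes "finite J"
  shows "\<exists>t < a. \<forall>j\<in>J. v j < ereal a \<longrightarrow> v j \<le> ereal t"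
proof -
  define R where "R = insert (a - 1) ((\<lambda>j. real_of_ereal (v j)) ` {j\<in>J. v j < ereal a \<and> v j \<noteq> -\<infinity>})"
  have R: "finite R" "R \<noteq> {}" using assms by (auto simp: R_def)
  have "r < a" if r: "r \<in> R" for r
  proof (cases "r = a - 1")
    case False
    then obtain j where "v j < ereal a" "v j \<noteq> -\<infinity>" "r = real_of_ereal (v j)"
      using r by (auto simp: R_def)
    then show ?thesis by (cases "v j") auto
  qed simp
  then have "Max R < a" using R by simp
  moreover have "v j \<le> ereal (Max R)" if "j \<in> J" "v j < ereal a" for j
  proof (cases "v j")
    case (real r)
    then have "r \<in> R" using that by (force simp: R_def)
    then show ?thesis using R real by simp
  qed (use that in auto)
  ultimately show ?thesis by blast
qed

lemma wquantile_ge_iff: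
  fixes w :: "'i \<Rightarrow> real" and v :: "'i \<Rightarrow> ereal"
  assumes fin: "finite J" and nonneg: "\<And>j. j \<in> J \<Longrightarrow> 0 \<le> w j"
  shows "ereal a \<le> wquantile \<alpha> w v J \<longleftrightarrow> (\<Sum>j\<in>{j\<in>J. v j < ereal a}. w j) < 1 - \<alpha>"
proof -
  let ?F = "\<lambda>t. \<Sum>j\<in>{j\<in>J. v j \<le> ereal t}. w j"
  let ?below = "\<Sum>j\<in>{j\<in>J. v j < ereal a}. w j"
  have "ereal a \<le> wquantile \<alpha> w v J \<longleftrightarrow> (\<forall>t. 1 - \<alpha> \<le> ?F t \<longrightarrow> a \<le> t)"
    unfolding wquantile_def by (auto simp: le_Inf_iff)
  also have "\<dots> \<longleftrightarrow> ?below < 1 - \<alpha>"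
  proof
    assume H: "\<forall>t. 1 - \<alpha> \<le> ?F t \<longrightarrow> a \<le> t"
    obtain t where "t < a" and t: "\<forall>j\<in>J. v j < ereal a \<longrightarrow> v j \<le> ereal t"
      using finite_ereal_below_bound[OF fin] by blast
    have "?below \<le> ?F t"
      by (rule sum_mono2) (use fin nonneg t in auto)
    then show "?below < 1 - \<alpha>" using H \<open>t < a\<close> by (meson not_less order_trans)
  next
    assume H: "?below < 1 - \<alpha>"
    show "\<forall>t. 1 - \<alpha> \<le> ?F t \<longrightarrow> a \<le> t"
    proof (intro allI impI)
      fix t assume t: "1 - \<alpha> \<le> ?F t"
      show "a \<le> t"
      proof (rule ccontr)
        assume "\<not> a \<le> t"
        then have "?F t \<le> ?below"
          by (intro sum_mono2) (use fin nonneg in \<open>auto intro: le_less_trans\<close>)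
        then show False using H t by simp
      qed
    qed
  qed
  finally show ?thesis .
qed

definition score_accepted :: "real \<Rightarrow> ('i \<Rightarrow> real) \<Rightarrow> ('i \<Rightarrow> real) \<Rightarrow> 'i set \<Rightarrow> 'i \<Rightarrow> real" where
  "score_accepted \<alpha> w S J i = of_bool (below_mass w S J (S i) < 1 - \<alpha>)"

lemma score_accepted_mono_set:
  assumes "finite J" "K \<subseteq> J" "\<And>j. j \<in> J \<Longrightarrow> 0 \<le> w j"
  shows "score_accepted \<alpha> w S J i \<le> score_accepted \<alpha> w S K i"
  using below_mass_mono_set[where J=J and K=K and w=w and S=S and t="S i", OF assms]
  by (auto simp: score_accepted_def)

lemma score_accepted_permute:
  assumes "\<pi> permutes J" "\<And>j. j \<in> J \<Longrightarrow> w (\<pi> j) = w j" "\<And>j. j \<in> J \<Longrightarrow> S' j = S (\<pi> j)"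
    and "i \<in> J"
  shows "score_accepted \<alpha> w S' J i = score_accepted \<alpha> w S J (\<pi> i)"
  using below_mass_permute[where \<pi>=\<pi> and J=J and w=w and S'=S' and S=S and t="S' i", OF assms(1-3)]
    assms(3,4) by (simp add: score_accepted_def)

text \<open>Ordering the units by score, the units that are not accepted form an upper segment
  whose lowest member already has mass at least 1 - alpha strictly below it.\<close>

lemma weighted_sum_score_accepted_ge:
  fixes w S :: "'i \<Rightarrow> real"
  assumes fin: "finite J" and nonneg: "\<And>j. j \<in> J \<Longrightarrow> 0 \<le> w j" and total: "1 - \<alpha> \<le> sum w J"
  shows "1 - \<alpha> \<le> (\<Sum>i\<in>J. w i * score_accepted \<alpha> w S J i)"
proof -
  define T where "T = {i\<in>J. below_mass w S J (S i) < 1 - \<alpha>}"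
  have "(\<Sum>i\<in>J. w i * score_accepted \<alpha> w S J i)
      = (\<Sum>i\<in>J. if below_mass w S J (S i) < 1 - \<alpha> then w i else 0)"
    by (intro sum.cong) (auto simp: score_accepted_def)
  also have "\<dots> = sum w T"
    using fin by (simp add: T_def sum.inter_filter)
  finally have sum_T: "(\<Sum>i\<in>J. w i * score_accepted \<alpha> w S J i) = sum w T" .
  show ?thesis
  proof (cases "J - T = {}")
    case True
    then have "T = J" by (auto simp: T_def)
    then show ?thesis using sum_T total by simp
  next
    case False
    obtain i0 where i0: "i0 \<in> J - T" and least: "\<And>i. i \<in> J - T \<Longrightarrow> S i0 \<le> S i"
      using arg_min_if_finite[where f=S, OF _ False] arg_min_least[where f=S, OF _ False] fin by blast
    have "1 - \<alpha> \<le> below_mass w S J (S i0)"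
      using i0 by (auto simp: T_def)
    also have "\<dots> \<le> sum w T"
      unfolding below_mass_def
      by (rule sum_mono2) (use fin nonneg least in \<open>auto simp: T_def not_le[symmetric]\<close>)
    finally show ?thesis using sum_T by simp
  qed
qed

lemma mem_Chat_iff:
  assumes "N0 n A \<noteq> 0"
  shows "y \<in> Chat \<alpha> s n X A Y x \<longleftrightarrow>
    below_mass (\<lambda>j. cq_weight n X A (Some j)) (\<lambda>l. s (X l) (Y l)) {l\<in>{..<n}. A l = 1} (s x y) < 1 - \<alpha>"
proof -
  have nonneg: "0 \<le> cq_weight n X A j" for j
    by (auto simp: cq_weight_def split: option.split intro!: sum_nonneg divide_nonneg_nonneg)
  have "{j\<in>cq_atoms n A. cq_value s X Y j < ereal (s x y)}
      = Some ` {l\<in>{l\<in>{..<n}. A l = 1}. s (X l) (Y l) < s x y}"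
    by (auto simp: cq_atoms_def cq_value_def)
  then have "(\<Sum>j\<in>{j\<in>cq_atoms n A. cq_value s X Y j < ereal (s x y)}. cq_weight n X A j)
      = below_mass (\<lambda>j. cq_weight n X A (Some j)) (\<lambda>l. s (X l) (Y l)) {l\<in>{..<n}. A l = 1} (s x y)"
    by (simp add: below_mass_def sum.reindex)
  then show ?thesis
    using assms wquantile_ge_iff[of "cq_atoms n A" "cq_weight n X A" "s x y" \<alpha> "cq_value s X Y"] nonneg
    by (simp add: Chat_def cq_atoms_def)
qed

lemma coverage_eq_average_score_accepted:
  assumes "N0 n A \<noteq> 0"
  shows "coverage \<alpha> s n X A Y =
    (\<Sum>i\<in>{i\<in>{..<n}. A i = 0}.
       score_accepted \<alpha> (\<lambda>j. cq_weight n X A (Some j)) (\<lambda>l. s (X l) (Y l)) {l\<in>{..<n}. A l = 1} i)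
    / real (N0 n A)"
  using assms by (simp add: coverage_def mem_Chat_iff score_accepted_def of_bool_def)

lemma sum_cq_weight_block_const:
  fixes g :: "nat \<Rightarrow> real"
  assumes const: "\<And>i j. i < n \<Longrightarrow> j < n \<Longrightarrow> X i = X j \<Longrightarrow> g i = g j"
  shows "(\<Sum>j<n. cq_weight n X A (Some j) * g j) = (\<Sum>i\<in>{i\<in>{..<n}. A i = 0}. g i) / real (N0 n A)"
proof -
  let ?U = "{i\<in>{..<n}. A i = 0}"
  let ?h = "\<lambda>j. g j / real (Nblk n X (X j))"
  have "(\<Sum>i\<in>?U. g i) = (\<Sum>i\<in>?U. \<Sum>j<n. if X i = X j then ?h j else 0)"
  proof (rule sum.cong[OF refl])
    fix i assume i: "i \<in> ?U"
    have block: "{j\<in>{..<n}. X i = X j} = {j\<in>{..<n}. X j = X i}" by auto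
    have "(\<Sum>j<n. if X i = X j then ?h j else 0) = (\<Sum>j\<in>{j\<in>{..<n}. X i = X j}. ?h j)"
      by (rule sum.inter_filter[symmetric]) simp
    also have "\<dots> = (\<Sum>j\<in>{j\<in>{..<n}. X i = X j}. ?h i)"
      by (rule sum.cong[OF refl]) (use const i in simp)
    also have "\<dots> = real (Nblk n X (X i)) * ?h i"
      by (simp only: sum_constant block Nblk_def)
    also have "\<dots> = g i"
      using i by (auto simp: Nblk_def card_eq_0_iff)
    finally show "g i = (\<Sum>j<n. if X i = X j then ?h j else 0)" ..
  qed
  also have "\<dots> = (\<Sum>j<n. \<Sum>i\<in>?U. if X i = X j then ?h j else 0)"
    by (rule sum.swap)
  also have "\<dots> = (\<Sum>j<n. real (Nblk0 n X A (X j)) * ?h j)"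
  proof (rule sum.cong[OF refl])
    fix j
    have block0: "{i\<in>?U. X i = X j} = {i\<in>{..<n}. X i = X j \<and> A i = 0}" by auto
    have "(\<Sum>i\<in>?U. if X i = X j then ?h j else 0) = (\<Sum>i\<in>{i\<in>?U. X i = X j}. ?h j)"
      by (rule sum.inter_filter[symmetric]) simp
    also have "\<dots> = real (Nblk0 n X A (X j)) * ?h j"
      by (simp only: sum_constant block0 Nblk0_def)
    finally show "(\<Sum>i\<in>?U. if X i = X j then ?h j else 0) = real (Nblk0 n X A (X j)) * ?h j" .
  qed
  finally have "(\<Sum>i\<in>?U. g i) / real (N0 n A) = (\<Sum>j<n. real (Nblk0 n X A (X j)) * ?h j) / real (N0 n A)"
    by simp
  then show ?thesis
    by (simp add: cq_weight_def sum_divide_distrib mult.commute)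
qed

lemma integral_permute_coordinates:
  fixes g :: "('i \<Rightarrow> 'a) \<Rightarrow> real"
  assumes sets_P: "sets P = sets (PiM I (\<lambda>_. M))" and perm: "\<pi> permutes I"
    and invariant: "distr P (PiM I (\<lambda>_. M)) (\<lambda>y. \<lambda>i\<in>I. y (\<pi> i)) = P"
    and g: "g \<in> borel_measurable (PiM I (\<lambda>_. M))"
  shows "(\<integral>y. g (\<lambda>i\<in>I. y (\<pi> i)) \<partial>P) = integral\<^sup>L P g"
proof -
  have "(\<lambda>y. \<lambda>i\<in>I. y (\<pi> i)) \<in> measurable P (PiM I (\<lambda>_. M))"
    unfolding measurable_cong_sets[OF sets_P refl]
    by (intro measurable_restrict measurable_component_singleton)
       (use perm in \<open>auto simp: permutes_in_image\<close>)
  from integral_distr[OF this g] show ?thesis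
    using invariant by simp
qed

lemma measurable_score_accepted:
  fixes S :: "'i \<Rightarrow> 'y \<Rightarrow> real"
  assumes S: "\<And>l. l \<in> I \<Longrightarrow> S l \<in> borel_measurable M"
    and J: "finite J" "J \<subseteq> I" and i: "i \<in> I"
  shows "(\<lambda>y. score_accepted \<alpha> w (\<lambda>l. S l (y l)) J i) \<in> borel_measurable (PiM I (\<lambda>_. M))"
proof -
  have score: "(\<lambda>y. S l (y l)) \<in> borel_measurable (PiM I (\<lambda>_. M))" if "l \<in> I" for l
    using measurable_compose[OF measurable_component_singleton[OF that] S[OF that]] .
  have "(\<lambda>y. below_mass w (\<lambda>l. S l (y l)) J (S i (y i))) \<in> borel_measurable (PiM I (\<lambda>_. M))"
    unfolding below_mass_eq_sum_if[OF J(1)]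
    by (intro borel_measurable_sum measurable_If borel_measurable_less score measurable_const)
       (use J i in auto)
  then show ?thesis
    unfolding score_accepted_def of_bool_def
    by (intro measurable_If borel_measurable_less measurable_const) auto
qed

lemma integrable_score_accepted:
  fixes S :: "'i \<Rightarrow> 'y \<Rightarrow> real"
  assumes "prob_space P" "sets P = sets (PiM I (\<lambda>_. M))"
    and "\<And>l. l \<in> I \<Longrightarrow> S l \<in> borel_measurable M" "finite J" "J \<subseteq> I" "i \<in> I"
  shows "integrable P (\<lambda>y. score_accepted \<alpha> w (\<lambda>l. S l (y l)) J i)"
proof -
  interpret prob_space P by fact
  show ?thesis
  proof (rule integrable_const_bound[where B=1])
    show "(\<lambda>y. score_accepted \<alpha> w (\<lambda>l. S l (y l)) J i) \<in> borel_measurable P"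
      unfolding measurable_cong_sets[OF assms(2) refl]
      by (rule measurable_score_accepted) (use assms in auto)
  qed (simp add: score_accepted_def)
qed

lemma integral_score_accepted_permute:
  fixes S :: "'i \<Rightarrow> 'y \<Rightarrow> real"
  assumes sets_P: "sets P = sets (PiM I (\<lambda>_. M))" and I: "finite I"
    and S: "\<And>l. l \<in> I \<Longrightarrow> S l \<in> borel_measurable M"
    and perm: "\<pi> permutes I"
    and invariant: "distr P (PiM I (\<lambda>_. M)) (\<lambda>y. \<lambda>i\<in>I. y (\<pi> i)) = P"
    and S_\<pi>: "\<And>l. l \<in> I \<Longrightarrow> S (\<pi> l) = S l" and w_\<pi>: "\<And>l. l \<in> I \<Longrightarrow> w (\<pi> l) = w l"
    and j: "j \<in> I"
  shows "(\<integral>y. score_accepted \<alpha> w (\<lambda>l. S l (y l)) I j \<partial>P)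
       = (\<integral>y. score_accepted \<alpha> w (\<lambda>l. S l (y l)) I (\<pi> j) \<partial>P)"
proof -
  let ?acc = "\<lambda>i y. score_accepted \<alpha> w (\<lambda>l. S l (y l)) I i"
  have swap: "?acc j (\<lambda>i\<in>I. y (\<pi> i)) = ?acc (\<pi> j) y" for y
    by (rule score_accepted_permute[where \<pi>=\<pi> and J=I and w=w
          and S'="\<lambda>l. S l ((\<lambda>i\<in>I. y (\<pi> i)) l)" and S="\<lambda>l. S l (y l)", OF perm w_\<pi>])
       (use S_\<pi> j in auto)
  have "integral\<^sup>L P (?acc j) = (\<integral>y. ?acc j (\<lambda>i\<in>I. y (\<pi> i)) \<partial>P)"
    by (rule integral_permute_coordinates[OF sets_P perm invariant, symmetric])
       (rule measurable_score_accepted[OF S I order_refl j])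
  then show ?thesis
    by (simp only: swap)
qed

lemma weighted_sum_integral_score_accepted_ge:
  fixes w :: "'i \<Rightarrow> real" and T :: "'a \<Rightarrow> 'i \<Rightarrow> real"
  assumes P: "prob_space P" and fin: "finite J" and nonneg: "\<And>j. j \<in> J \<Longrightarrow> 0 \<le> w j"
    and total: "1 - \<alpha> \<le> sum w J"
    and integrable: "\<And>i. i \<in> J \<Longrightarrow> integrable P (\<lambda>y. score_accepted \<alpha> w (T y) J i)"
  shows "1 - \<alpha> \<le> (\<Sum>i\<in>J. w i * (\<integral>y. score_accepted \<alpha> w (T y) J i \<partial>P))"
proof -
  interpret prob_space P by fact
  have "1 - \<alpha> = (\<integral>y. 1 - \<alpha> \<partial>P)"
    by (simp add: prob_space)
  also have "\<dots> \<le> (\<integral>y. (\<Sum>i\<in>J. w i * score_accepted \<alpha> w (T y) J i) \<partial>P)"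
    using weighted_sum_score_accepted_ge[OF fin nonneg total] integrable
    by (intro integral_mono Bochner_Integration.integrable_sum integrable_mult_right) auto
  also have "\<dots> = (\<Sum>i\<in>J. w i * (\<integral>y. score_accepted \<alpha> w (T y) J i \<partial>P))"
    using integrable by (subst Bochner_Integration.integral_sum) auto
  finally show ?thesis .
qed

lemma integral_score_accepted_block_swap:
  fixes s :: "'x \<Rightarrow> 'y \<Rightarrow> real" and n :: nat
  assumes sets_P: "sets P = sets (PiM {..<n} (\<lambda>_. M))"
    and s_X: "\<And>l. l \<in> {..<n} \<Longrightarrow> s (X l) \<in> borel_measurable M"
    and exch: "\<And>\<pi>. \<pi> permutes {..<n} \<Longrightarrow> (\<forall>i<n. X (\<pi> i) = X i) \<Longrightarrow>
        distr P (PiM {..<n} (\<lambda>_. M)) (\<lambda>y. \<lambda>i\<in>{..<n}. y (\<pi> i)) = P"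
    and w_X: "\<And>l m. X l = X m \<Longrightarrow> w l = w m"
    and ij: "i < n" "j < n" "X i = X j"
  shows "(\<integral>y. score_accepted \<alpha> w (\<lambda>l. s (X l) (y l)) {..<n} i \<partial>P)
       = (\<integral>y. score_accepted \<alpha> w (\<lambda>l. s (X l) (y l)) {..<n} j \<partial>P)"
proof -
  let ?\<pi> = "Transposition.transpose i j"
  have perm: "?\<pi> permutes {..<n}" using ij by (intro permutes_swap_id) auto
  have X_\<pi>: "\<forall>l<n. X (?\<pi> l) = X l" using ij by (auto simp: Transposition.transpose_def)
  have w_\<pi>: "w (?\<pi> l) = w l" for l
    by (rule w_X) (use ij in \<open>simp add: Transposition.transpose_def\<close>)
  have S_\<pi>: "s (X (?\<pi> l)) = s (X l)" for l
    using ij by (simp add: Transposition.transpose_def)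
  have "(\<integral>y. score_accepted \<alpha> w (\<lambda>l. s (X l) (y l)) {..<n} j \<partial>P)
      = (\<integral>y. score_accepted \<alpha> w (\<lambda>l. s (X l) (y l)) {..<n} (?\<pi> j) \<partial>P)"
    by (rule integral_score_accepted_permute[OF sets_P finite_lessThan s_X perm exch[OF perm X_\<pi>]])
       (use ij S_\<pi> w_\<pi> in auto)
  then show ?thesis by simp
qed

lemma integral_coverage_eq:
  assumes "N0 n A \<noteq> 0"
    and integrable: "\<And>i. i < n \<Longrightarrow>
      integrable P (\<lambda>y. score_accepted \<alpha> (\<lambda>j. cq_weight n X A (Some j)) (\<lambda>l. s (X l) (y l))
        {l\<in>{..<n}. A l = 1} i)"
  shows "(\<integral>y. coverage \<alpha> s n X A y \<partial>P) =
    (\<Sum>i\<in>{i\<in>{..<n}. A i = 0}.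
       \<integral>y. score_accepted \<alpha> (\<lambda>j. cq_weight n X A (Some j)) (\<lambda>l. s (X l) (y l))
         {l\<in>{..<n}. A l = 1} i \<partial>P)
    / real (N0 n A)"
  unfolding coverage_eq_average_score_accepted[OF assms(1)]
  using integrable by (subst integral_divide_zero, subst Bochner_Integration.integral_sum) auto

theorem theorem1:
  fixes MX :: "'x measure" and MY :: "'y measure"
    and s :: "'x \<Rightarrow> 'y \<Rightarrow> real"
    and n :: nat and X :: "nat \<Rightarrow> 'x" and A :: "nat \<Rightarrow> nat"
    and P :: "(nat \<Rightarrow> 'y) measure" and \<alpha> :: real
  assumes alpha: "0 < \<alpha>" "\<alpha> < 1"
    and X_space: "\<And>i. i < n \<Longrightarrow> X i \<in> space MX"
    and A_01: "\<And>i. i < n \<Longrightarrow> A i \<in> {0, 1}"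
    and s_meas: "(\<lambda>(x, y). s x y) \<in> borel_measurable (MX \<Otimes>\<^sub>M MY)"
    and P_prob: "prob_space P"
    and P_sets: "sets P = sets (PiM {..<n} (\<lambda>_. MY))"
    and exch: "\<And>\<pi>. \<pi> permutes {..<n} \<Longrightarrow> (\<forall>i<n. X (\<pi> i) = X i) \<Longrightarrow>
        distr P (PiM {..<n} (\<lambda>_. MY)) (\<lambda>y. \<lambda>i\<in>{..<n}. y (\<pi> i)) = P"
  shows "(\<integral>y. coverage \<alpha> s n X A y \<partial>P) \<ge> 1 - \<alpha>"
proof (cases "N0 n A = 0")
  case True
  then show ?thesis
    using alpha prob_space.prob_space[OF P_prob] by (simp add: coverage_def)
next
  case False
  define w where "w = (\<lambda>j. cq_weight n X A (Some j))"
  define acc where "acc J i = (\<lambda>y. score_accepted \<alpha> w (\<lambda>l. s (X l) (y l)) J i)" for J i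
  let ?U = "{i\<in>{..<n}. A i = 0}" and ?obs = "{l\<in>{..<n}. A l = 1}"
  have w_nonneg: "0 \<le> w j" for j
    by (simp add: w_def cq_weight_def)
  have s_X: "l \<in> {..<n} \<Longrightarrow> s (X l) \<in> borel_measurable MY" for l
    using measurable_Pair2[OF s_meas X_space] by simp
  have integrable_acc: "integrable P (acc J i)" if "J \<subseteq> {..<n}" "i < n" for J i
    unfolding acc_def using that finite_subset
    by (intro integrable_score_accepted[OF P_prob P_sets s_X]) auto
  have acc_block: "integral\<^sup>L P (acc {..<n} i) = integral\<^sup>L P (acc {..<n} j)"
    if "i < n" "j < n" "X i = X j" for i j
    unfolding acc_def
    by (rule integral_score_accepted_block_swap[where s=s and X=X and w=w, OF P_sets s_X exch _ that])
       (auto simp: w_def cq_weight_def)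
  have integrable_obs: "integrable P (acc ?obs i)" if "i < n" for i
    using that by (intro integrable_acc) auto
  have acc_mono: "acc {..<n} i y \<le> acc ?obs i y" for i y
    unfolding acc_def using w_nonneg by (intro score_accepted_mono_set) auto
  have "sum w {..<n} = 1"
    using sum_cq_weight_block_const[where g="\<lambda>_. 1" and n=n and X=X and A=A] False
    by (simp add: w_def N0_def)
  then have "1 - \<alpha> \<le> (\<Sum>j<n. w j * integral\<^sup>L P (acc {..<n} j))"
    unfolding acc_def using w_nonneg alpha integrable_acc[unfolded acc_def]
    by (intro weighted_sum_integral_score_accepted_ge[OF P_prob]) auto
  also have "\<dots> = (\<Sum>i\<in>?U. integral\<^sup>L P (acc {..<n} i)) / real (N0 n A)"
    unfolding w_def by (rule sum_cq_weight_block_const, rule acc_block)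
  also have "\<dots> \<le> (\<Sum>i\<in>?U. integral\<^sup>L P (acc ?obs i)) / real (N0 n A)"
    by (intro divide_right_mono sum_mono integral_mono integrable_acc integrable_obs acc_mono) auto
  also have "\<dots> = (\<integral>y. coverage \<alpha> s n X A y \<partial>P)"
    unfolding acc_def w_def
    by (rule integral_coverage_eq[OF False integrable_obs[unfolded acc_def w_def], symmetric])
  finally show ?thesis .
qed

end
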